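(* Let $X$ be a topological space and $\{X_\alpha\}_{\alpha\in I}$ a family of open subspaces of $X$, each of which is dense-connected. If $X_\alpha\cap X_\beta\neq\emptyset$ for any two distinct $\alpha,\beta\in I$, then $\bigcup_{\alpha\in I}X_\alpha$ is dense-connected.
   Context: A space $X$ is dense-connected if every dense subset of $X$ (with the subspace topology) is connected. *)

theory Defs
  imports "HOL-Analysis.Analysis"
begin

definition dense_connected :: "'a topology \<Rightarrow> bool" where
  "dense_connected X \<longleftrightarrow>
     (\<forall>D. D \<subseteq> topspace X \<and> X closure_of D = topspace X \<longrightarrow> connected_space (subtopology X D))"

end

theory Submission
  imports Defs
begin

text \<open>A dense subset \<open>D\<close> of \<open>\<Union>\<alpha>. X\<^sub>\<alpha>\<close> meets each open \<open>X\<^sub>\<alpha>\<close> in a dense subset of \<open>X\<^sub>\<alpha>\<close>, which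
  is therefore connected; it also meets every nonempty open \<open>X\<^sub>\<alpha> \<inter> X\<^sub>\<beta>\<close>, so the connected
  pieces \<open>D \<inter> X\<^sub>\<alpha>\<close> pairwise intersect and their union \<open>D\<close> is connected.\<close>

lemma connectedin_UN_pairwise_intersecting:
  assumes conn: "\<And>i. i \<in> I \<Longrightarrow> connectedin X (S i)"
    and meet: "\<And>i j. i \<in> I \<Longrightarrow> j \<in> I \<Longrightarrow> i \<noteq> j \<Longrightarrow> S i \<inter> S j \<noteq> {}"
  shows "connectedin X (\<Union>i\<in>I. S i)"
proof (cases "(\<Union>i\<in>I. S i) = {}")
  case False
  then obtain i0 a where i0: "i0 \<in> I" and a: "a \<in> S i0" by blast
  have "connectedin X (S i0 \<union> S j)" if "j \<in> I" for j
    using conn meet i0 that by (cases "j = i0") (auto intro: connectedin_Un)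
  then have "connectedin X (\<Union>j\<in>I. S i0 \<union> S j)"
    using a i0 by (intro connectedin_Union) auto
  moreover have "(\<Union>j\<in>I. S i0 \<union> S j) = (\<Union>i\<in>I. S i)"
    using i0 by blast
  ultimately show ?thesis by simp
qed simp

lemma dense_Int_openin:
  assumes "X closure_of D = topspace X" and "openin X V"
  shows "subtopology X V closure_of (D \<inter> V) = topspace (subtopology X V)"
  unfolding dense_intersects_open
proof (intro allI impI, elim conjE)
  fix T
  assume "openin (subtopology X V) T" and "T \<noteq> {}"
  moreover from this have "openin X T" and "T \<subseteq> V"
    using \<open>openin X V\<close> openin_trans_full openin_imp_subset by blast+
  ultimately show "D \<inter> V \<inter> T \<noteq> {}"
    using assms(1) unfolding dense_intersects_open by blast
qed

lemma dense_connected_iff_connectedin: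
  "dense_connected Y \<longleftrightarrow>
     (\<forall>D. D \<subseteq> topspace Y \<and> Y closure_of D = topspace Y \<longrightarrow> connectedin Y D)"
  by (simp add: dense_connected_def connectedin_def)

lemma connectedin_dense_Int_openin:
  assumes "dense_connected (subtopology Y V)" and "openin Y V"
    and "D \<subseteq> topspace Y" and "Y closure_of D = topspace Y"
  shows "connectedin Y (D \<inter> V)"
proof -
  have "D \<inter> V \<subseteq> topspace (subtopology Y V)"
    using assms(3) by auto
  then have "connectedin (subtopology Y V) (D \<inter> V)"
    using assms(1) dense_Int_openin[OF assms(4,2)]
    unfolding dense_connected_iff_connectedin by blast
  then show ?thesis
    by (simp add: connectedin_subtopology)
qed

theorem proposition4p13:
  fixes X :: "'a topology" and U :: "'i \<Rightarrow> 'a set" and I :: "'i set"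
  assumes "\<And>\<alpha>. \<alpha> \<in> I \<Longrightarrow> openin X (U \<alpha>)"
    and "\<And>\<alpha>. \<alpha> \<in> I \<Longrightarrow> dense_connected (subtopology X (U \<alpha>))"
    and "\<And>\<alpha> \<beta>. \<alpha> \<in> I \<Longrightarrow> \<beta> \<in> I \<Longrightarrow> \<alpha> \<noteq> \<beta> \<Longrightarrow> U \<alpha> \<inter> U \<beta> \<noteq> {}"
  shows "dense_connected (subtopology X (\<Union>\<alpha>\<in>I. U \<alpha>))"
  unfolding dense_connected_iff_connectedin
proof (intro allI impI, elim conjE)
  define Y where "Y = subtopology X (\<Union>\<alpha>\<in>I. U \<alpha>)"
  fix D
  assume D: "D \<subseteq> topspace Y" and dense: "Y closure_of D = topspace Y"
  have open_U: "openin Y (U \<alpha>)" if "\<alpha> \<in> I" for \<alpha>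
    using assms(1) that unfolding Y_def by (meson UN_upper subset_openin_subtopology)
  have "connectedin Y (D \<inter> U \<alpha>)" if \<alpha>: "\<alpha> \<in> I" for \<alpha>
  proof (rule connectedin_dense_Int_openin[OF _ open_U[OF \<alpha>] D dense])
    have "subtopology Y (U \<alpha>) = subtopology X (U \<alpha>)"
      using \<alpha> unfolding Y_def subtopology_subtopology by (simp add: Int_absorb1 UN_upper)
    with assms(2)[OF \<alpha>] show "dense_connected (subtopology Y (U \<alpha>))"
      by simp
  qed
  moreover have "D \<inter> U \<alpha> \<inter> (D \<inter> U \<beta>) \<noteq> {}" if "\<alpha> \<in> I" "\<beta> \<in> I" "\<alpha> \<noteq> \<beta>" for \<alpha> \<beta>
  proof -
    have "openin Y (U \<alpha> \<inter> U \<beta>)"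
      using open_U that by (simp add: openin_Int)
    then have "D \<inter> (U \<alpha> \<inter> U \<beta>) \<noteq> {}"
      using dense assms(3)[OF that] unfolding dense_intersects_open by blast
    then show ?thesis by blast
  qed
  ultimately have "connectedin Y (\<Union>\<alpha>\<in>I. D \<inter> U \<alpha>)"
    by (rule connectedin_UN_pairwise_intersecting)
  moreover have "(\<Union>\<alpha>\<in>I. D \<inter> U \<alpha>) = D"
    using D unfolding Y_def by auto
  ultimately show "connectedin Y D" by simp
qed

end
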